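(* Let $\mathbf{D}=\{(x_i,y_i):i=0,\dots,N\}$ and $\bar{\mathbf{D}}=\{(x_i,\bar y_i):i=0,\dots,N\}$ be two data sets with $x_0<x_1<\dots<x_N$, and let $f,\hat f\in C(I)$ with $f(x_i)=y_i$, $\hat f(x_i)=\bar y_i$. Let $b_r,\hat b_r\in C(I)$ ($r\in\mathbb{N}$) with $b_r(x_0)=f(x_0)$, $b_r(x_N)=f(x_N)$, $\hat b_r(x_0)=\hat f(x_0)$, $\hat b_r(x_N)=\hat f(x_N)$, $\sup_r\|b_r\|_\infty<\infty$, $\sup_r\|\hat b_r\|_\infty<\infty$. Let $f^\alpha_b$ be the non-stationary $\alpha$-fractal function of $f$ with base functions $b_r$, and $\bar f^\alpha_b$ the non-stationary $\alpha$-fractal function of $\hat f$ with base functions $\hat b_r$, both with the same scaling functions $\alpha_{i,r}$. Then $$\|f^\alpha_b-\bar f^\alpha_b\|_\infty\le\frac{\|f-\hat f\|_\infty+\|\alpha\|_\infty\sup_{r\in\mathbb{N}}\|b_r-\hat b_r\|_\infty}{1-\|\alpha\|_\infty}.$$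
   Context: $I=[x_0,x_N]$, $I_i=[x_{i-1},x_i]$, $l_i:I\to I_i$ the affine bijection $l_i(x)=\frac{x_i-x_{i-1}}{x_N-x_0}x+\frac{x_Nx_{i-1}-x_0x_i}{x_N-x_0}$, $Q_i=l_i^{-1}$. Scaling functions $\alpha_{i,r}:I\to\mathbb{R}$ ($i=1,\dots,N$, $r\in\mathbb{N}$) are continuous with $\|\alpha\|_\infty:=\sup_r\max_i\|\alpha_{i,r}\|_\infty<1$. Non-stationary $\alpha$-fractal function of $f\in C(I)$ with base functions $b=\{b_r\}$ (continuous, $b_r(x_0)=f(x_0)$, $b_r(x_N)=f(x_N)$, $\sup_r\|b_r\|_\infty<\infty$): with $C_f(I)=\{g\in C(I):g(x_0)=f(x_0),g(x_N)=f(x_N)\}$ and $(T^{\alpha_r}g)(x)=f(x)+\alpha_{i,r}(Q_i(x))(g-b_r)(Q_i(x))$ for $x\in I_i$, it is the uniform limit, independent of $g\in C_f(I)$, of $T^{\alpha_1}\circ\cdots\circ T^{\alpha_r}g$ as $r\to\infty$. (It interpolates the points $(x_i,f(x_i))$.) *)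

theory Defs
  imports "HOL-Analysis.Analysis"
begin

definition ns_I :: "(nat \<Rightarrow> real) \<Rightarrow> nat \<Rightarrow> real set" where
  "ns_I x N = {x 0 .. x N}"

text \<open>Q_i = inverse of the affine map l_i from I onto I_i = [x (i-1), x i].\<close>
definition ns_Q :: "(nat \<Rightarrow> real) \<Rightarrow> nat \<Rightarrow> nat \<Rightarrow> real \<Rightarrow> real" where
  "ns_Q x N i t = x 0 + (x N - x 0) * (t - x (i - 1)) / (x i - x (i - 1))"

text \<open>Index i of a subinterval I_i containing t (the smallest one; at interior
  nodes both choices give the same value of the operator on C_f(I)).\<close>
definition ns_idx :: "(nat \<Rightarrow> real) \<Rightarrow> real \<Rightarrow> nat" where
  "ns_idx x t = (LEAST i. 1 \<le> i \<and> t \<le> x i)"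

definition ns_T :: "(nat \<Rightarrow> real) \<Rightarrow> nat \<Rightarrow> (real \<Rightarrow> real) \<Rightarrow> (nat \<Rightarrow> real \<Rightarrow> real)
    \<Rightarrow> (nat \<Rightarrow> nat \<Rightarrow> real \<Rightarrow> real) \<Rightarrow> nat \<Rightarrow> (real \<Rightarrow> real) \<Rightarrow> real \<Rightarrow> real" where
  "ns_T x N f b \<alpha> r g t =
     (let i = ns_idx x t; q = ns_Q x N i t in f t + \<alpha> i r q * (g q - b r q))"

text \<open>ns_iter r g = (T^{alpha_1} o ... o T^{alpha_r}) g.\<close>
fun ns_iter :: "(nat \<Rightarrow> real) \<Rightarrow> nat \<Rightarrow> (real \<Rightarrow> real) \<Rightarrow> (nat \<Rightarrow> real \<Rightarrow> real)
    \<Rightarrow> (nat \<Rightarrow> nat \<Rightarrow> real \<Rightarrow> real) \<Rightarrow> nat \<Rightarrow> (real \<Rightarrow> real) \<Rightarrow> real \<Rightarrow> real" where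
  "ns_iter x N f b \<alpha> 0 g = g"
| "ns_iter x N f b \<alpha> (Suc n) g = ns_iter x N f b \<alpha> n (ns_T x N f b \<alpha> (Suc n) g)"

definition ns_Cf :: "(nat \<Rightarrow> real) \<Rightarrow> nat \<Rightarrow> (real \<Rightarrow> real) \<Rightarrow> (real \<Rightarrow> real) set" where
  "ns_Cf x N f = {g. continuous_on (ns_I x N) g \<and> g (x 0) = f (x 0) \<and> g (x N) = f (x N)}"

definition is_ns_fractal :: "(nat \<Rightarrow> real) \<Rightarrow> nat \<Rightarrow> (real \<Rightarrow> real) \<Rightarrow> (nat \<Rightarrow> real \<Rightarrow> real)
    \<Rightarrow> (nat \<Rightarrow> nat \<Rightarrow> real \<Rightarrow> real) \<Rightarrow> (real \<Rightarrow> real) \<Rightarrow> bool" where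
  "is_ns_fractal x N f b \<alpha> \<phi> \<longleftrightarrow>
     (\<forall>g \<in> ns_Cf x N f. uniform_limit (ns_I x N) (\<lambda>r. ns_iter x N f b \<alpha> r g) \<phi> sequentially)"

definition sup_norm_on :: "real set \<Rightarrow> (real \<Rightarrow> real) \<Rightarrow> real" where
  "sup_norm_on S g = Sup ((\<lambda>t. \<bar>g t\<bar>) ` S)"

definition alpha_vals :: "(nat \<Rightarrow> real) \<Rightarrow> nat \<Rightarrow> (nat \<Rightarrow> nat \<Rightarrow> real \<Rightarrow> real) \<Rightarrow> real set" where
  "alpha_vals x N \<alpha> = {sup_norm_on (ns_I x N) (\<alpha> i r) | i r. 1 \<le> i \<and> i \<le> N \<and> 1 \<le> r}"

definition alpha_norm :: "(nat \<Rightarrow> real) \<Rightarrow> nat \<Rightarrow> (nat \<Rightarrow> nat \<Rightarrow> real \<Rightarrow> real) \<Rightarrow> real" where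
  "alpha_norm x N \<alpha> = Sup (alpha_vals x N \<alpha>)"

end

theory Submission
  imports Defs
begin

text \<open>Both fractal functions are limits of the iterates started at f and at fh. With T and T'
  the Read-Bajraktarevic operators of (f, b) and of (fh, bh), one step satisfies
  |T g - T' h| \<le> \<parallel>f - fh\<parallel> + \<parallel>\<alpha>\<parallel> (\<parallel>g - h\<parallel> + sup_r \<parallel>b_r - bh_r\<parallel>),
  so the band of half-width D = (\<parallel>f - fh\<parallel> + \<parallel>\<alpha>\<parallel> sup_r \<parallel>b_r - bh_r\<parallel>) / (1 - \<parallel>\<alpha>\<parallel>), the fixed
  point of the right-hand side, is invariant. It contains the starting pair (f, fh), hence
  all pairs of iterates, and passing to the pointwise limit gives the estimate.\<close>

lemma sup_norm_on_upper:
  assumes "compact S" "continuous_on S g" "t \<in> S"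
  shows "\<bar>g t\<bar> \<le> sup_norm_on S g"
proof -
  have "compact ((\<lambda>t. \<bar>g t\<bar>) ` S)"
    using assms(1,2) by (intro compact_continuous_image continuous_intros)
  then have "bdd_above ((\<lambda>t. \<bar>g t\<bar>) ` S)"
    by (intro bounded_imp_bdd_above compact_imp_bounded)
  then show ?thesis
    unfolding sup_norm_on_def using assms(3) by (intro cSup_upper) auto
qed

lemma sup_norm_on_least:
  assumes "S \<noteq> {}" "\<And>t. t \<in> S \<Longrightarrow> \<bar>g t\<bar> \<le> D"
  shows "sup_norm_on S g \<le> D"
  unfolding sup_norm_on_def using assms by (intro cSup_least) auto

lemma ns_idx_bounds:
  assumes "1 \<le> N" "t \<in> ns_I x N"
  shows "1 \<le> ns_idx x t" "ns_idx x t \<le> N" "x (ns_idx x t - 1) \<le> t" "t \<le> x (ns_idx x t)"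
proof -
  let ?P = "\<lambda>i. 1 \<le> i \<and> t \<le> x i"
  have "?P N" using assms by (auto simp: ns_I_def)
  then have P: "?P (ns_idx x t)" and "ns_idx x t \<le> N"
    unfolding ns_idx_def by (rule LeastI, rule Least_le)
  then show "1 \<le> ns_idx x t" "ns_idx x t \<le> N" "t \<le> x (ns_idx x t)" by auto
  show "x (ns_idx x t - 1) \<le> t"
  proof (cases "ns_idx x t = 1")
    case True
    then show ?thesis using assms(2) by (simp add: ns_I_def)
  next
    case False
    then have "\<not> ?P (ns_idx x t - 1)"
      using P not_less_Least[of "ns_idx x t - 1" ?P] unfolding ns_idx_def by fastforce
    then show ?thesis using P False by auto
  qed
qed

lemma ns_Q_in_ns_I:
  assumes "1 \<le> N" "\<And>i. i < N \<Longrightarrow> x i < x (Suc i)" "t \<in> ns_I x N"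
  shows "ns_Q x N (ns_idx x t) t \<in> ns_I x N"
proof -
  define i where "i = ns_idx x t"
  have i: "1 \<le> i" "i \<le> N" "x (i - 1) \<le> t" "t \<le> x i"
    using ns_idx_bounds[OF assms(1,3)] unfolding i_def by auto
  have "x (i - 1) < x i" using assms(2)[of "i - 1"] i(1,2) by simp
  define s where "s = (t - x (i - 1)) / (x i - x (i - 1))"
  have "0 \<le> s" "s \<le> 1" unfolding s_def using \<open>x (i - 1) < x i\<close> i by (auto simp: divide_simps)
  moreover have "x 0 \<le> x N" using assms(3) by (simp add: ns_I_def)
  ultimately have "0 \<le> (x N - x 0) * s" "(x N - x 0) * s \<le> x N - x 0"
    by (auto intro: mult_left_le)
  moreover have "ns_Q x N i t = x 0 + (x N - x 0) * s" unfolding ns_Q_def s_def by simp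
  ultimately show ?thesis unfolding i_def ns_I_def by auto
qed

lemma ns_T_diff_bound:
  assumes "1 \<le> N" "\<And>i. i < N \<Longrightarrow> x i < x (Suc i)" "t \<in> ns_I x N"
    and f: "\<And>t. t \<in> ns_I x N \<Longrightarrow> \<bar>f t - fh t\<bar> \<le> F"
    and \<alpha>: "\<And>i q. 1 \<le> i \<Longrightarrow> i \<le> N \<Longrightarrow> q \<in> ns_I x N \<Longrightarrow> \<bar>\<alpha> i r q\<bar> \<le> A"
    and b: "\<And>q. q \<in> ns_I x N \<Longrightarrow> \<bar>b r q - bh r q\<bar> \<le> B"
    and g: "\<And>q. q \<in> ns_I x N \<Longrightarrow> \<bar>g q - h q\<bar> \<le> D"
  shows "\<bar>ns_T x N f b \<alpha> r g t - ns_T x N fh bh \<alpha> r h t\<bar> \<le> F + A * (D + B)"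
proof -
  define i where "i = ns_idx x t"
  define q where "q = ns_Q x N i t"
  have i: "1 \<le> i" "i \<le> N" using ns_idx_bounds[OF assms(1,3)] by (auto simp: i_def)
  have q: "q \<in> ns_I x N" using ns_Q_in_ns_I[OF assms(1-3)] by (simp add: q_def i_def)
  have "ns_T x N f b \<alpha> r g t - ns_T x N fh bh \<alpha> r h t
      = (f t - fh t) + \<alpha> i r q * ((g q - h q) - (b r q - bh r q))"
    unfolding ns_T_def Let_def i_def[symmetric] q_def[symmetric] by (simp add: algebra_simps)
  also have "\<bar>\<dots>\<bar> \<le> \<bar>f t - fh t\<bar> + \<bar>\<alpha> i r q\<bar> * \<bar>(g q - h q) - (b r q - bh r q)\<bar>"
    by (metis abs_mult abs_triangle_ineq)
  also have "\<dots> \<le> F + A * (D + B)"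
  proof (intro add_mono mult_mono)
    show "\<bar>(g q - h q) - (b r q - bh r q)\<bar> \<le> D + B"
      using g[OF q] b[OF q] by linarith
    show "0 \<le> A" using \<alpha>[OF i q] by linarith
  qed (use f[OF assms(3)] \<alpha>[OF i q] in auto)
  finally show ?thesis .
qed

lemma ns_iter_diff_bound:
  assumes "1 \<le> N" "\<And>i. i < N \<Longrightarrow> x i < x (Suc i)"
    and f: "\<And>t. t \<in> ns_I x N \<Longrightarrow> \<bar>f t - fh t\<bar> \<le> F"
    and \<alpha>: "\<And>i r q. 1 \<le> i \<Longrightarrow> i \<le> N \<Longrightarrow> 1 \<le> r \<Longrightarrow> q \<in> ns_I x N \<Longrightarrow> \<bar>\<alpha> i r q\<bar> \<le> A"
    and b: "\<And>r q. 1 \<le> r \<Longrightarrow> q \<in> ns_I x N \<Longrightarrow> \<bar>b r q - bh r q\<bar> \<le> B"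
    and D: "F + A * (D + B) \<le> D"
    and g: "\<And>q. q \<in> ns_I x N \<Longrightarrow> \<bar>g q - h q\<bar> \<le> D"
    and t: "t \<in> ns_I x N"
  shows "\<bar>ns_iter x N f b \<alpha> n g t - ns_iter x N fh bh \<alpha> n h t\<bar> \<le> D"
  using g t
proof (induction n arbitrary: g h t)
  case 0
  then show ?case by simp
next
  case (Suc n)
  have "\<bar>ns_T x N f b \<alpha> (Suc n) g q - ns_T x N fh bh \<alpha> (Suc n) h q\<bar> \<le> F + A * (D + B)"
    if "q \<in> ns_I x N" for q
    by (rule ns_T_diff_bound[OF assms(1,2) that f]) (use \<alpha> b Suc.prems(1) in auto)
  with D have "\<bar>ns_T x N f b \<alpha> (Suc n) g q - ns_T x N fh bh \<alpha> (Suc n) h q\<bar> \<le> D"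
    if "q \<in> ns_I x N" for q
    using that by fastforce
  then show ?case using Suc.IH Suc.prems(2) by simp
qed

lemma ns_fractal_diff_bound:
  assumes "1 \<le> N" "\<And>i. i < N \<Longrightarrow> x i < x (Suc i)"
    and "continuous_on (ns_I x N) f" "continuous_on (ns_I x N) fh"
    and f: "\<And>t. t \<in> ns_I x N \<Longrightarrow> \<bar>f t - fh t\<bar> \<le> F"
    and \<alpha>: "\<And>i r q. 1 \<le> i \<Longrightarrow> i \<le> N \<Longrightarrow> 1 \<le> r \<Longrightarrow> q \<in> ns_I x N \<Longrightarrow> \<bar>\<alpha> i r q\<bar> \<le> A"
    and b: "\<And>r q. 1 \<le> r \<Longrightarrow> q \<in> ns_I x N \<Longrightarrow> \<bar>b r q - bh r q\<bar> \<le> B"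
    and D: "F + A * (D + B) \<le> D" "F \<le> D"
    and \<phi>: "is_ns_fractal x N f b \<alpha> \<phi>" and \<psi>: "is_ns_fractal x N fh bh \<alpha> \<psi>"
    and t: "t \<in> ns_I x N"
  shows "\<bar>\<phi> t - \<psi> t\<bar> \<le> D"
proof -
  have "f \<in> ns_Cf x N f" "fh \<in> ns_Cf x N fh" using assms(3,4) by (simp_all add: ns_Cf_def)
  then have "(\<lambda>r. ns_iter x N f b \<alpha> r f t) \<longlonglongrightarrow> \<phi> t" "(\<lambda>r. ns_iter x N fh bh \<alpha> r fh t) \<longlonglongrightarrow> \<psi> t"
    using \<phi> \<psi> t unfolding is_ns_fractal_def by (auto intro: tendsto_uniform_limitI)
  then have "(\<lambda>r. \<bar>ns_iter x N f b \<alpha> r f t - ns_iter x N fh bh \<alpha> r fh t\<bar>) \<longlonglongrightarrow> \<bar>\<phi> t - \<psi> t\<bar>"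
    by (intro tendsto_intros)
  moreover have "\<bar>ns_iter x N f b \<alpha> r f t - ns_iter x N fh bh \<alpha> r fh t\<bar> \<le> D" for r
  proof (rule ns_iter_diff_bound[where x=x and N=N, OF assms(1,2) f \<alpha> b D(1) _ t])
    show "\<bar>f q - fh q\<bar> \<le> D" if "q \<in> ns_I x N" for q using f[OF that] D(2) by linarith
  qed
  ultimately show ?thesis by (intro tendsto_upperbound) (auto intro: always_eventually)
qed

lemma abs_le_alpha_norm:
  assumes "\<And>i r. 1 \<le> i \<Longrightarrow> i \<le> N \<Longrightarrow> 1 \<le> r \<Longrightarrow> continuous_on (ns_I x N) (\<alpha> i r)"
    and "bdd_above (alpha_vals x N \<alpha>)"
    and "1 \<le> i" "i \<le> N" "1 \<le> r" "q \<in> ns_I x N"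
  shows "\<bar>\<alpha> i r q\<bar> \<le> alpha_norm x N \<alpha>"
proof -
  have "\<bar>\<alpha> i r q\<bar> \<le> sup_norm_on (ns_I x N) (\<alpha> i r)"
    using assms by (intro sup_norm_on_upper) (auto simp: ns_I_def)
  also have "\<dots> \<le> alpha_norm x N \<alpha>"
    unfolding alpha_norm_def using assms by (intro cSup_upper) (auto simp: alpha_vals_def)
  finally show ?thesis .
qed

lemma abs_le_SUP_sup_norm_on:
  assumes "compact S" "\<And>r. 1 \<le> r \<Longrightarrow> continuous_on S (g r)"
    and "\<And>r t. 1 \<le> r \<Longrightarrow> t \<in> S \<Longrightarrow> \<bar>g r t\<bar> \<le> M"
    and "1 \<le> r" "t \<in> S"
  shows "\<bar>g r t\<bar> \<le> (SUP r\<in>{1..}. sup_norm_on S (g r))"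
proof -
  have "bdd_above ((\<lambda>r. sup_norm_on S (g r)) ` {1..})"
    using assms(3,5) by (intro bdd_aboveI2 sup_norm_on_least) auto
  then have "sup_norm_on S (g r) \<le> (SUP r\<in>{1..}. sup_norm_on S (g r))"
    using assms(4) by (intro cSUP_upper) auto
  then show ?thesis using sup_norm_on_upper[OF assms(1) assms(2)[OF assms(4)] assms(5)] by simp
qed

theorem mainTheorem8:
  fixes x :: "nat \<Rightarrow> real" and N :: nat
    and f fh :: "real \<Rightarrow> real"
    and b bh :: "nat \<Rightarrow> real \<Rightarrow> real"
    and \<alpha> :: "nat \<Rightarrow> nat \<Rightarrow> real \<Rightarrow> real"
    and \<phi> \<psi> :: "real \<Rightarrow> real"
  assumes N: "1 \<le> N"
    and incr: "\<And>i. i < N \<Longrightarrow> x i < x (Suc i)"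
    and f_cont: "continuous_on (ns_I x N) f"
    and fh_cont: "continuous_on (ns_I x N) fh"
    and b_cont: "\<And>r. 1 \<le> r \<Longrightarrow> continuous_on (ns_I x N) (b r)"
    and bh_cont: "\<And>r. 1 \<le> r \<Longrightarrow> continuous_on (ns_I x N) (bh r)"
    and b_end: "\<And>r. 1 \<le> r \<Longrightarrow> b r (x 0) = f (x 0) \<and> b r (x N) = f (x N)"
    and bh_end: "\<And>r. 1 \<le> r \<Longrightarrow> bh r (x 0) = fh (x 0) \<and> bh r (x N) = fh (x N)"
    and b_bdd: "\<exists>M. \<forall>r\<ge>1. \<forall>t\<in>ns_I x N. \<bar>b r t\<bar> \<le> M"
    and bh_bdd: "\<exists>M. \<forall>r\<ge>1. \<forall>t\<in>ns_I x N. \<bar>bh r t\<bar> \<le> M"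
    and \<alpha>_cont: "\<And>i r. 1 \<le> i \<Longrightarrow> i \<le> N \<Longrightarrow> 1 \<le> r \<Longrightarrow> continuous_on (ns_I x N) (\<alpha> i r)"
    and \<alpha>_bdd: "bdd_above (alpha_vals x N \<alpha>)"
    and \<alpha>_lt1: "alpha_norm x N \<alpha> < 1"
    and \<phi>: "is_ns_fractal x N f b \<alpha> \<phi>"
    and \<psi>: "is_ns_fractal x N fh bh \<alpha> \<psi>"
  shows "sup_norm_on (ns_I x N) (\<lambda>t. \<phi> t - \<psi> t)
    \<le> (sup_norm_on (ns_I x N) (\<lambda>t. f t - fh t)
        + alpha_norm x N \<alpha> * (SUP r\<in>{1..}. sup_norm_on (ns_I x N) (\<lambda>t. b r t - bh r t)))
      / (1 - alpha_norm x N \<alpha>)"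
proof -
  define A where "A = alpha_norm x N \<alpha>"
  define F where "F = sup_norm_on (ns_I x N) (\<lambda>t. f t - fh t)"
  define B where "B = (SUP r\<in>{1..}. sup_norm_on (ns_I x N) (\<lambda>t. b r t - bh r t))"
  have "x 0 < x N" by (rule lift_Suc_mono_less_ivl[where N="{..<N}"]) (use N incr in auto)
  then have x0: "x 0 \<in> ns_I x N" and I: "compact (ns_I x N)" by (auto simp: ns_I_def)
  have fF: "\<bar>f t - fh t\<bar> \<le> F" if "t \<in> ns_I x N" for t
    unfolding F_def using I f_cont fh_cont that by (intro sup_norm_on_upper continuous_intros)
  have \<alpha>A: "\<bar>\<alpha> i r q\<bar> \<le> A" if "1 \<le> i" "i \<le> N" "1 \<le> r" "q \<in> ns_I x N" for i r q
    unfolding A_def using abs_le_alpha_norm[OF \<alpha>_cont \<alpha>_bdd that] .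
  obtain Mb Mh where
    Mb: "\<And>r t. 1 \<le> r \<Longrightarrow> t \<in> ns_I x N \<Longrightarrow> \<bar>b r t\<bar> \<le> Mb" and
    Mh: "\<And>r t. 1 \<le> r \<Longrightarrow> t \<in> ns_I x N \<Longrightarrow> \<bar>bh r t\<bar> \<le> Mh"
    using b_bdd bh_bdd by blast
  have "\<bar>b r t - bh r t\<bar> \<le> Mb + Mh" if "1 \<le> r" "t \<in> ns_I x N" for r t
    using Mb[OF that] Mh[OF that] abs_triangle_ineq4[of "b r t" "bh r t"] by linarith
  then have bB: "\<bar>b r q - bh r q\<bar> \<le> B" if "1 \<le> r" "q \<in> ns_I x N" for r q
    unfolding B_def using I b_cont bh_cont that
    by (intro abs_le_SUP_sup_norm_on[where M="Mb + Mh"] continuous_intros) auto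
  have "0 \<le> F" "0 \<le> A" "0 \<le> B"
    using fF[OF x0] \<alpha>A[OF order_refl N order_refl x0] bB[OF order_refl x0] by linarith+
  define D where "D = (F + A * B) / (1 - A)"
  have "A < 1" using \<alpha>_lt1 by (simp add: A_def)
  then have "F + A * (D + B) = D" "F \<le> D"
    using \<open>0 \<le> F\<close> \<open>0 \<le> A\<close> \<open>0 \<le> B\<close> by (auto simp: D_def field_simps)
  then have "\<bar>\<phi> t - \<psi> t\<bar> \<le> D" if "t \<in> ns_I x N" for t
    using ns_fractal_diff_bound[OF N incr f_cont fh_cont fF \<alpha>A bB _ _ \<phi> \<psi> that] by simp
  then show ?thesis unfolding D_def F_def A_def B_def using x0 by (intro sup_norm_on_least) auto
qed

end
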